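(* Let $\mathcal{P}$ be a profile of unrooted phylogenetic trees whose display graph $G(\mathcal{P})$ is connected (so $\mathrm{LG}(\mathcal{P})$ is connected). If $F$ is a minimal separator of $\mathrm{LG}(\mathcal{P})$, then $\mathrm{LG}(\mathcal{P})-F$ has exactly two connected components.
   Context: A phylogenetic tree is an unrooted tree whose leaves are bijectively labeled (leaves identified with labels; internal vertices have degree at least three). A profile $\mathcal{P}=\{T_1,\dots,T_k\}$ is a finite collection of phylogenetic trees; internal vertices of distinct trees are disjoint, while leaves with the same label are the same vertex. The display graph $G(\mathcal{P})$ has vertex set $\bigcup_i V(T_i)$ and edge set $\bigcup_i E(T_i)$. $\mathrm{LG}(\mathcal{P})$ is the line graph of $G(\mathcal{P})$ (vertices are edges of $G(\mathcal{P})$, adjacent iff they share an endpoint). In a graph $G$, for nonadjacent vertices $a,b$, an $a$-$b$ separator is $U\subset V(G)$ with $a,b$ in different components of $G-U$; it is minimal if no proper subset is an $a$-$b$ separator; a minimal separator is a minimal $a$-$b$ separator for some nonadjacent $a,b$. *)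

theory Defs
  imports Main
begin

definition simple_graph :: "'v set \<Rightarrow> 'v set set \<Rightarrow> bool" where
  "simple_graph V E \<longleftrightarrow> (\<forall>e\<in>E. e \<subseteq> V \<and> card e = 2)"

definition reach :: "'v set \<Rightarrow> 'v set set \<Rightarrow> 'v \<Rightarrow> 'v \<Rightarrow> bool" where
  "reach V E x y \<longleftrightarrow> x \<in> V \<and>
     (x, y) \<in> {(u, w). u \<in> V \<and> w \<in> V \<and> {u, w} \<in> E}\<^sup>*"

definition connected_graph :: "'v set \<Rightarrow> 'v set set \<Rightarrow> bool" where
  "connected_graph V E \<longleftrightarrow> (\<forall>x\<in>V. \<forall>y\<in>V. reach V E x y)"

definition components :: "'v set \<Rightarrow> 'v set set \<Rightarrow> 'v set set" where
  "components V E = {{y. reach V E x y} | x. x \<in> V}"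

definition del_verts_E :: "'v set set \<Rightarrow> 'v set \<Rightarrow> 'v set set" where
  "del_verts_E E U = {e \<in> E. e \<inter> U = {}}"

definition is_cycle :: "'v set \<Rightarrow> 'v set set \<Rightarrow> 'v list \<Rightarrow> bool" where
  "is_cycle V E cs \<longleftrightarrow> length cs \<ge> 3 \<and> distinct cs \<and> set cs \<subseteq> V \<and>
     (\<forall>i < length cs - 1. {cs ! i, cs ! Suc i} \<in> E) \<and> {last cs, hd cs} \<in> E"

definition is_tree :: "'v set \<Rightarrow> 'v set set \<Rightarrow> bool" where
  "is_tree V E \<longleftrightarrow> finite V \<and> V \<noteq> {} \<and> simple_graph V E \<and> connected_graph V E \<and>
     \<not> (\<exists>cs. is_cycle V E cs)"

definition degree :: "'v set set \<Rightarrow> 'v \<Rightarrow> nat" where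
  "degree E v = card {e \<in> E. v \<in> e}"

text \<open>Leaves are the vertices of degree at most one; leaves are identified with
  their labels, so the labelling is the identity.\<close>
definition leaves :: "'v set \<Rightarrow> 'v set set \<Rightarrow> 'v set" where
  "leaves V E = {v \<in> V. degree E v \<le> 1}"

definition phylo_tree :: "'v set \<Rightarrow> 'v set set \<Rightarrow> bool" where
  "phylo_tree V E \<longleftrightarrow> is_tree V E \<and> (\<forall>v \<in> V - leaves V E. degree E v \<ge> 3)"

definition profile :: "('v set \<times> 'v set set) set \<Rightarrow> bool" where
  "profile P \<longleftrightarrow> finite P \<and> (\<forall>(V, E) \<in> P. phylo_tree V E) \<and>
     (\<forall>T \<in> P. \<forall>T' \<in> P. T \<noteq> T' \<longrightarrow>
        fst T \<inter> fst T' \<subseteq> leaves (fst T) (snd T) \<inter> leaves (fst T') (snd T'))"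

definition display_V :: "('v set \<times> 'v set set) set \<Rightarrow> 'v set" where
  "display_V P = (\<Union>T \<in> P. fst T)"

definition display_E :: "('v set \<times> 'v set set) set \<Rightarrow> 'v set set" where
  "display_E P = (\<Union>T \<in> P. snd T)"

definition line_E :: "'v set set \<Rightarrow> 'v set set set" where
  "line_E E = {{e, f} | e f. e \<in> E \<and> f \<in> E \<and> e \<noteq> f \<and> e \<inter> f \<noteq> {}}"

definition separator :: "'w set \<Rightarrow> 'w set set \<Rightarrow> 'w \<Rightarrow> 'w \<Rightarrow> 'w set \<Rightarrow> bool" where
  "separator V E a b U \<longleftrightarrow> U \<subseteq> V \<and> a \<in> V - U \<and> b \<in> V - U \<and>
     \<not> reach (V - U) (del_verts_E E U) a b"

definition minimal_ab_separator :: "'w set \<Rightarrow> 'w set set \<Rightarrow> 'w \<Rightarrow> 'w \<Rightarrow> 'w set \<Rightarrow> bool" where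
  "minimal_ab_separator V E a b U \<longleftrightarrow> separator V E a b U \<and>
     (\<forall>U'. U' \<subset> U \<longrightarrow> \<not> separator V E a b U')"

definition minimal_separator :: "'w set \<Rightarrow> 'w set set \<Rightarrow> 'w set \<Rightarrow> bool" where
  "minimal_separator V E U \<longleftrightarrow> (\<exists>a b. a \<in> V \<and> b \<in> V \<and> a \<noteq> b \<and> {a, b} \<notin> E \<and>
     minimal_ab_separator V E a b U)"

end

theory Submission
  imports Defs
begin

text \<open>Let \<open>F\<close> separate the edges \<open>a\<close> and \<open>b\<close> minimally in the line graph. Minimality means
  that every \<open>f \<in> F\<close>, put back, reconnects \<open>a\<close> and \<open>b\<close>; hence \<open>f\<close> shares an endpoint with
  an edge of the component of \<open>a\<close> and with one of the component of \<open>b\<close>, and these two edges meet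
  \<open>f\<close> in different endpoints since the two components have no common vertex. Walking along a path
  of the connected graph \<open>G\<close>, every vertex therefore lies on an edge of one of the two components,
  so every edge outside \<open>F\<close> belongs to one of them.\<close>

lemma reach_closed:
  assumes "reach V E x y"
  shows "y \<in> V"
proof -
  have "(x, y) \<in> {(u, w). u \<in> V \<and> w \<in> V \<and> {u, w} \<in> E}\<^sup>*" "x \<in> V"
    using assms unfolding reach_def by auto
  then show ?thesis by (induction rule: rtrancl_induct) auto
qed

lemma reach_sym:
  assumes "reach V E x y"
  shows "reach V E y x"
proof -
  have "sym {(u, w). u \<in> V \<and> w \<in> V \<and> {u, w} \<in> E}"
    by (auto simp: sym_def insert_commute)
  then show ?thesis
    using assms reach_closed[OF assms] unfolding reach_def by (meson sym_rtrancl symD)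
qed

lemma reach_trans: "reach V E x y \<Longrightarrow> reach V E y z \<Longrightarrow> reach V E x z"
  unfolding reach_def by auto

lemma card_components_eq_2:
  assumes "a \<in> V" "b \<in> V" "\<not> reach V E a b"
    and "\<And>x. x \<in> V \<Longrightarrow> reach V E a x \<or> reach V E b x"
  shows "card (components V E) = 2"
proof -
  have "components V E = {{y. reach V E a y}, {y. reach V E b y}}"
    unfolding components_def
    using assms by (blast intro: reach_sym reach_trans)
  moreover have "{y. reach V E a y} \<noteq> {y. reach V E b y}"
    using assms(2,3) by (auto simp: reach_def)
  ultimately show ?thesis by simp
qed

definition meets :: "'a set set \<Rightarrow> ('a set \<times> 'a set) set" where
  "meets W = {(u, w). u \<in> W \<and> w \<in> W \<and> u \<noteq> w \<and> u \<inter> w \<noteq> {}}"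

lemma reach_del_line_E_iff:
  "reach (E - F) (del_verts_E (line_E E) F) x y \<longleftrightarrow> x \<in> E - F \<and> (x, y) \<in> (meets (E - F))\<^sup>*"
proof -
  have "{(u, w). u \<in> E - F \<and> w \<in> E - F \<and> {u, w} \<in> del_verts_E (line_E E) F} = meets (E - F)"
    unfolding meets_def del_verts_E_def line_E_def by (auto simp: doubleton_eq_iff)
  then show ?thesis unfolding reach_def by simp
qed

lemma meets_rtrancl_sym:
  assumes "(x, y) \<in> (meets W)\<^sup>*"
  shows "(y, x) \<in> (meets W)\<^sup>*"
proof -
  have "sym (meets W)" by (auto simp: meets_def sym_def)
  then show ?thesis using assms by (meson sym_rtrancl symD)
qed

lemma meets_rtrancl_closed: "(x, y) \<in> (meets W)\<^sup>* \<Longrightarrow> x \<in> W \<Longrightarrow> y \<in> W"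
  by (induction rule: rtrancl_induct) (auto simp: meets_def)

lemma meets_rtrancl_if_inter: "e \<in> W \<Longrightarrow> g \<in> W \<Longrightarrow> e \<inter> g \<noteq> {} \<Longrightarrow> (e, g) \<in> (meets W)\<^sup>*"
  by (cases "e = g") (auto simp: meets_def)

lemma meets_insert_rtrancl_cases:
  assumes "(x, y) \<in> (meets (insert f W))\<^sup>*" "x \<in> W" "f \<notin> W"
  shows "(x, y) \<in> (meets W)\<^sup>* \<or> (\<exists>c. (x, c) \<in> (meets W)\<^sup>* \<and> c \<inter> f \<noteq> {})"
  using assms(1)
proof (induction rule: rtrancl_induct)
  case base
  then show ?case by simp
next
  case (step y z)
  then show ?case
  proof (elim disjE)
    assume xy: "(x, y) \<in> (meets W)\<^sup>*"
    have "y \<in> W" using meets_rtrancl_closed[OF xy assms(2)] .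
    then have "z = f \<and> y \<inter> f \<noteq> {} \<or> (y, z) \<in> meets W"
      using step.hyps(2) by (auto simp: meets_def)
    then show ?thesis using xy by (meson rtrancl.rtrancl_into_rtrancl)
  qed blast
qed

lemma meets_insert_rtrancl_meets:
  assumes "(x, y) \<in> (meets (insert f W))\<^sup>*" "(x, y) \<notin> (meets W)\<^sup>*" "x \<in> W" "f \<notin> W"
  obtains c where "(x, c) \<in> (meets W)\<^sup>*" "c \<inter> f \<noteq> {}"
  using meets_insert_rtrancl_cases[OF assms(1,3,4)] assms(2) by blast

lemma minimal_ab_separator_line_E_meets_both_sides:
  assumes sep: "minimal_ab_separator E (line_E E) a b F" and f: "f \<in> F"
  obtains c d where "(a, c) \<in> (meets (E - F))\<^sup>*" "(b, d) \<in> (meets (E - F))\<^sup>*"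
    "c \<inter> f \<noteq> {}" "d \<inter> f \<noteq> {}"
proof -
  let ?R = "meets (E - F)" and ?R' = "meets (insert f (E - F))"
  have ab: "F \<subseteq> E" "a \<in> E - F" "b \<in> E - F" "(a, b) \<notin> ?R\<^sup>*"
    using sep unfolding minimal_ab_separator_def separator_def reach_del_line_E_iff by auto
  have "\<not> separator E (line_E E) a b (F - {f})"
    using sep f unfolding minimal_ab_separator_def by blast
  moreover have "E - (F - {f}) = insert f (E - F)"
    using f ab(1) by auto
  ultimately have ab': "(a, b) \<in> ?R'\<^sup>*"
    using ab unfolding separator_def reach_del_line_E_iff by auto
  have "(b, a) \<notin> ?R\<^sup>*"
    using ab(4) meets_rtrancl_sym by blast
  moreover have f': "f \<notin> E - F"
    using f by blast
  ultimately obtain d where "(b, d) \<in> ?R\<^sup>*" "d \<inter> f \<noteq> {}"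
    using meets_insert_rtrancl_meets[OF meets_rtrancl_sym[OF ab'] _ ab(3)] by blast
  moreover obtain c where "(a, c) \<in> ?R\<^sup>*" "c \<inter> f \<noteq> {}"
    using meets_insert_rtrancl_meets[OF ab' ab(4) ab(2) f'] by blast
  ultimately show thesis using that by blast
qed

lemma meets_sides_disjoint:
  assumes "a \<in> W" "b \<in> W" "(a, b) \<notin> (meets W)\<^sup>*" "(a, c) \<in> (meets W)\<^sup>*" "(b, d) \<in> (meets W)\<^sup>*"
  shows "c \<inter> d = {}"
proof (rule ccontr)
  assume cd: "c \<inter> d \<noteq> {}"
  have "c \<in> W" "d \<in> W" using meets_rtrancl_closed assms(1-2,4-5) by blast+
  then have "(c, d) \<in> (meets W)\<^sup>*" using cd by (rule meets_rtrancl_if_inter)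
  then have "(a, b) \<in> (meets W)\<^sup>*"
    using assms(4) meets_rtrancl_sym[OF assms(5)] by (meson rtrancl_trans)
  then show False using assms(3) by blast
qed

text \<open>\<open>both_sides\<close> is what minimality of the separator \<open>E - W\<close> provides.\<close>
lemma meets_sides_cover:
  assumes conn: "connected_graph V E" and edges: "\<And>e. e \<in> E \<Longrightarrow> e \<noteq> {} \<and> e \<subseteq> V"
    and W: "W \<subseteq> E" "a \<in> W" "b \<in> W" "(a, b) \<notin> (meets W)\<^sup>*"
    and both_sides: "\<And>f. f \<in> E - W \<Longrightarrow>
      \<exists>c d. (a, c) \<in> (meets W)\<^sup>* \<and> (b, d) \<in> (meets W)\<^sup>* \<and> c \<inter> f \<noteq> {} \<and> d \<inter> f \<noteq> {}"
    and x: "x \<in> W"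
  shows "(a, x) \<in> (meets W)\<^sup>* \<or> (b, x) \<in> (meets W)\<^sup>*"
proof -
  let ?R = "meets W"
  define on_side where "on_side z \<longleftrightarrow> (\<exists>e. z \<in> e \<and> ((a, e) \<in> ?R\<^sup>* \<or> (b, e) \<in> ?R\<^sup>*))" for z
  have side_in_W: "e \<in> W" if "(a, e) \<in> ?R\<^sup>* \<or> (b, e) \<in> ?R\<^sup>*" for e
    using that W(2,3) meets_rtrancl_closed by blast
  obtain q where q: "q \<in> a" using edges W(1,2) by blast
  have on_side_walk: "on_side p" if "(q, p) \<in> {(u, w). u \<in> V \<and> w \<in> V \<and> {u, w} \<in> E}\<^sup>*" for p
    using that
  proof (induction rule: rtrancl_induct)
    case base
    show ?case using q unfolding on_side_def by blast
  next
    case (step y z)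
    then have yz: "{y, z} \<in> E" by simp
    show ?case
    proof (cases "{y, z} \<in> W")
      case True
      from step.IH obtain e where e: "y \<in> e" "(a, e) \<in> ?R\<^sup>* \<or> (b, e) \<in> ?R\<^sup>*"
        unfolding on_side_def by blast
      have "(e, {y, z}) \<in> ?R\<^sup>*"
        using meets_rtrancl_if_inter[OF side_in_W[OF e(2)] True] e(1) by blast
      then have "(a, {y, z}) \<in> ?R\<^sup>* \<or> (b, {y, z}) \<in> ?R\<^sup>*"
        using e(2) by (meson rtrancl_trans)
      then show ?thesis unfolding on_side_def by blast
    next
      case False
      then have "{y, z} \<in> E - W" using yz by blast
      from both_sides[OF this] obtain c d where cd: "(a, c) \<in> ?R\<^sup>*" "(b, d) \<in> ?R\<^sup>*"
        "c \<inter> {y, z} \<noteq> {}" "d \<inter> {y, z} \<noteq> {}"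
        by blast
      have "c \<inter> d = {}" using meets_sides_disjoint[OF W(2-4) cd(1,2)] .
      then have "z \<in> c \<or> z \<in> d" using cd(3,4) by blast
      then show ?thesis unfolding on_side_def using cd(1,2) by blast
    qed
  qed
  obtain p where p: "p \<in> x" using edges W(1) x by blast
  have "q \<in> V" "p \<in> V" using edges W(1,2) x p q by blast+
  then have "reach V E q p" using conn unfolding connected_graph_def by blast
  then have "on_side p" unfolding reach_def by (blast intro: on_side_walk)
  then obtain e where e: "p \<in> e" "(a, e) \<in> ?R\<^sup>* \<or> (b, e) \<in> ?R\<^sup>*"
    unfolding on_side_def by blast
  have "(e, x) \<in> ?R\<^sup>*" using meets_rtrancl_if_inter[OF side_in_W[OF e(2)] x] e(1) p by blast
  then show ?thesis using e(2) by (meson rtrancl_trans)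
qed

theorem card_components_line_graph_minus_minimal_separator:
  assumes "connected_graph V E" "\<And>e. e \<in> E \<Longrightarrow> e \<noteq> {} \<and> e \<subseteq> V"
    and "minimal_separator E (line_E E) F"
  shows "card (components (E - F) (del_verts_E (line_E E) F)) = 2"
proof -
  obtain a b where sep: "minimal_ab_separator E (line_E E) a b F"
    using assms(3) unfolding minimal_separator_def by blast
  then have ab: "F \<subseteq> E" "a \<in> E - F" "b \<in> E - F" "(a, b) \<notin> (meets (E - F))\<^sup>*"
    unfolding minimal_ab_separator_def separator_def reach_del_line_E_iff by auto
  have "\<exists>c d. (a, c) \<in> (meets (E - F))\<^sup>* \<and> (b, d) \<in> (meets (E - F))\<^sup>* \<and>
      c \<inter> f \<noteq> {} \<and> d \<inter> f \<noteq> {}" if "f \<in> E - (E - F)" for f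
    using that ab(1) minimal_ab_separator_line_E_meets_both_sides[OF sep, of f]
    by (metis double_diff order_refl)
  then have "(a, x) \<in> (meets (E - F))\<^sup>* \<or> (b, x) \<in> (meets (E - F))\<^sup>*" if "x \<in> E - F" for x
    using meets_sides_cover[OF assms(1,2) Diff_subset ab(2-4) _ that] by blast
  then show ?thesis
    using ab by (intro card_components_eq_2[of a _ b]) (auto simp: reach_del_line_E_iff)
qed

lemma profile_display_edge:
  assumes "profile P" "e \<in> display_E P"
  shows "e \<subseteq> display_V P \<and> card e = 2"
proof -
  obtain T where T: "T \<in> P" "e \<in> snd T"
    using assms(2) unfolding display_E_def by blast
  then have "simple_graph (fst T) (snd T)"
    using assms(1) unfolding profile_def phylo_tree_def is_tree_def by auto
  then show ?thesis
    using T unfolding simple_graph_def display_V_def by blast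
qed

theorem lemma4:
  fixes P :: "('v set \<times> 'v set set) set" and F :: "'v set set"
  assumes "profile P"
    and "connected_graph (display_V P) (display_E P)"
    and "minimal_separator (display_E P) (line_E (display_E P)) F"
  shows "card (components (display_E P - F) (del_verts_E (line_E (display_E P)) F)) = 2"
proof (rule card_components_line_graph_minus_minimal_separator[OF assms(2) _ assms(3)])
  fix e assume "e \<in> display_E P"
  then show "e \<noteq> {} \<and> e \<subseteq> display_V P"
    using profile_display_edge[OF assms(1)] by fastforce
qed

end
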